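(* Let $b,n,c$ be positive integers with $4\leqslant 4b\leqslant n$. For every abelian group $\Gamma$ of order $4nbc$ there exists a diagonal $\mathrm{MRS}_\Gamma(n;4b;c)$.
   Context: For positive integers $m,n,s,k,c$ and an abelian group $\Gamma$ of order $nkc$, an $\mathrm{MRS}_\Gamma(m,n;s,k;c)$ is a set of $c$ partially filled $m\times n$ arrays (some cells may be empty) with entries in $\Gamma$ such that: every element of $\Gamma$ appears exactly once and in a unique array; in every array each row contains exactly $s$ filled cells and each column contains exactly $k$ filled cells; and there exist $\omega,\delta\in\Gamma$ such that in every array each row sum is $\omega$ and each column sum is $\delta$. $\mathrm{MRS}_\Gamma(n;k;c)$ denotes $\mathrm{MRS}_\Gamma(n,n;k,k;c)$. In an $n\times n$ array, for $0\leqslant \ell\leqslant n-1$ the diagonal $D_\ell$ is the set of cells $(i,j)$ with $j-i\equiv \ell\pmod n$. An $\mathrm{MRS}_\Gamma(n;k;c)$ is diagonal if, in each of its arrays, the filled cells are exactly the cells of $k$ consecutive diagonals $D_{t},\ldots,D_{t+k-1}$ (indices modulo $n$). *)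

theory Defs
  imports Main
begin

text \<open>A collection of c partially filled m x n arrays with entries in the abelian
  group 'a is modelled as A :: nat => nat => nat => 'a option, where A t i j is the
  content of cell (i,j) (row i < m, column j < n) of the array t < c; None = empty.\<close>

definition filled_row :: "(nat \<Rightarrow> nat \<Rightarrow> nat \<Rightarrow> 'a option) \<Rightarrow> nat \<Rightarrow> nat \<Rightarrow> nat \<Rightarrow> nat set" where
  "filled_row A n t i = {j. j < n \<and> A t i j \<noteq> None}"

definition filled_col :: "(nat \<Rightarrow> nat \<Rightarrow> nat \<Rightarrow> 'a option) \<Rightarrow> nat \<Rightarrow> nat \<Rightarrow> nat \<Rightarrow> nat set" where
  "filled_col A m t j = {i. i < m \<and> A t i j \<noteq> None}"

definition is_MRS :: "nat \<Rightarrow> nat \<Rightarrow> nat \<Rightarrow> nat \<Rightarrow> nat \<Rightarrow> (nat \<Rightarrow> nat \<Rightarrow> nat \<Rightarrow> 'a::{ab_group_add,finite} option) \<Rightarrow> bool" where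
  "is_MRS m n s k c A \<longleftrightarrow>
     0 < m \<and> 0 < n \<and> 0 < s \<and> 0 < k \<and> 0 < c \<and>
     card (UNIV :: 'a set) = n * k * c \<and>
     \<comment> \<open>every group element appears exactly once, in exactly one array\<close>
     (\<forall>g::'a. \<exists>!(t, i, j). t < c \<and> i < m \<and> j < n \<and> A t i j = Some g) \<and>
     \<comment> \<open>row / column fillings\<close>
     (\<forall>t<c. \<forall>i<m. card (filled_row A n t i) = s) \<and>
     (\<forall>t<c. \<forall>j<n. card (filled_col A m t j) = k) \<and>
     \<comment> \<open>constant row and column sums\<close>
     (\<exists>\<omega> \<delta>. (\<forall>t<c. \<forall>i<m. (\<Sum>j\<in>filled_row A n t i. the (A t i j)) = \<omega>) \<and>
            (\<forall>t<c. \<forall>j<n. (\<Sum>i\<in>filled_col A m t j. the (A t i j)) = \<delta>))"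

definition on_diag :: "nat \<Rightarrow> nat \<Rightarrow> nat \<Rightarrow> nat \<Rightarrow> bool" where
  "on_diag n l i j \<longleftrightarrow> (int j - int i) mod int n = int l mod int n"

definition is_diagonal_MRS :: "nat \<Rightarrow> nat \<Rightarrow> nat \<Rightarrow> (nat \<Rightarrow> nat \<Rightarrow> nat \<Rightarrow> 'a::{ab_group_add,finite} option) \<Rightarrow> bool" where
  "is_diagonal_MRS n k c A \<longleftrightarrow>
     is_MRS n n k k c A \<and>
     (\<forall>t<c. \<exists>\<tau><n. \<forall>i<n. \<forall>j<n.
         A t i j \<noteq> None \<longleftrightarrow> (\<exists>l<k. on_diag n (\<tau> + l) i j))"

end

theory Submission
  imports Defs
begin

text \<open>
  Since \<open>4\<close> divides \<open>|\<Gamma>|\<close>, there are an involution \<open>u\<close> and an element \<open>s\<close> such that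
  neither \<open>s\<close> nor \<open>s + u\<close> is of the form \<open>x + x\<close>. Then \<open>x \<mapsto> s - x\<close> and \<open>x \<mapsto> x + u\<close>
  generate a Klein four-group acting freely on \<open>\<Gamma>\<close>, which therefore splits into \<open>nbc\<close>
  quadruples \<open>x, s - x, s + u - x, x + u\<close>; index their representatives by
  \<open>(t, m, r) \<in> c \<times> b \<times> n\<close>.

  Array \<open>t\<close> is filled on the diagonals \<open>D\<^sub>0, \<dots>, D\<^bsub>4b - 1\<^esub>\<close>: the cell of row \<open>i\<close> on
  \<open>D\<^bsub>4m + q\<^esub>\<close> gets entry \<open>q\<close> of the quadruple of \<open>(t, m, i + q mod 2)\<close>. Along a row,
  block \<open>m\<close> then reads \<open>x, s - y, s + u - x, y + u\<close>, and along a column it reads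
  \<open>x, s - x, s + u - y, y + u\<close>; as \<open>u + u = 0\<close>, every block sums to \<open>s + s\<close>.
\<close>

lemma add_mod_diff_cancel: "i < n \<Longrightarrow> l < n \<Longrightarrow> ((i + l) mod n + n - i) mod n = (l::nat)"
  by (cases "i + l < n") (simp_all add: le_mod_geq)

lemma diff_mod_add_cancel: "i < n \<Longrightarrow> j < n \<Longrightarrow> (i + (j + n - i) mod n) mod n = (j::nat)"
  by (cases "i \<le> j") (simp_all add: le_mod_geq)

lemma diff_mod_diff_cancel: "i < n \<Longrightarrow> j < n \<Longrightarrow> (j + n - (j + n - i) mod n) mod n = (i::nat)"
  by (cases "i \<le> j") (simp_all add: le_mod_geq)

lemma int_diff_mod: "i < n \<Longrightarrow> j < n \<Longrightarrow> int ((j + n - i) mod n) = (int j - int i) mod int n"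
  by (simp add: zmod_int add.commute[of "int j"] add_diff_eq[symmetric])

lemma mod_diff_add_one: "l < k \<Longrightarrow> ((k - (l + 1)) mod n + 1) mod n = (k - l) mod (n::nat)"
  by (simp add: mod_Suc_eq Suc_diff_Suc)

text \<open>\<open>F t i l\<close> is the entry of array \<open>t\<close> in row \<open>i\<close> on the diagonal \<open>D\<^sub>l\<close>.\<close>

definition diag_array :: "nat \<Rightarrow> nat \<Rightarrow> (nat \<Rightarrow> nat \<Rightarrow> nat \<Rightarrow> 'a) \<Rightarrow> nat \<Rightarrow> nat \<Rightarrow> nat \<Rightarrow> 'a option"
  where "diag_array n k F t i j =
    (if (j + n - i) mod n < k then Some (F t i ((j + n - i) mod n)) else None)"

lemma diag_array_nonempty_iff_on_diag:
  assumes "i < n" "j < n" "k \<le> n"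
  shows "diag_array n k F t i j \<noteq> None \<longleftrightarrow> (\<exists>l<k. on_diag n l i j)"
proof -
  have "on_diag n l i j \<longleftrightarrow> (j + n - i) mod n = l" if "l < k" for l
    using that assms
    by (simp add: on_diag_def int_diff_mod[OF assms(1,2), symmetric] flip: of_nat_mod)
  then show ?thesis
    unfolding diag_array_def by auto
qed

lemma diag_array_row_entry:
  "i < n \<Longrightarrow> l < k \<Longrightarrow> k \<le> n \<Longrightarrow> diag_array n k F t i ((i + l) mod n) = Some (F t i l)"
  unfolding diag_array_def by (simp add: add_mod_diff_cancel)

lemma diag_array_col_entry:
  "j < n \<Longrightarrow> l < k \<Longrightarrow> k \<le> n \<Longrightarrow>
    diag_array n k F t ((j + n - l) mod n) j = Some (F t ((j + n - l) mod n) l)"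
  unfolding diag_array_def by (simp add: diff_mod_diff_cancel)

lemma bij_betw_filled_row_diag_array:
  assumes "i < n" "k \<le> n"
  shows "bij_betw (\<lambda>l. (i + l) mod n) {..<k} (filled_row (diag_array n k F) n t i)"
proof (rule bij_betw_byWitness[where f' = "\<lambda>j. (j + n - i) mod n"])
  show "\<forall>l\<in>{..<k}. ((i + l) mod n + n - i) mod n = l"
    using assms by (simp add: add_mod_diff_cancel)
  show "\<forall>j\<in>filled_row (diag_array n k F) n t i. (i + (j + n - i) mod n) mod n = j"
    using assms by (simp add: filled_row_def diff_mod_add_cancel)
  show "(\<lambda>l. (i + l) mod n) ` {..<k} \<subseteq> filled_row (diag_array n k F) n t i"
    using assms by (auto simp: filled_row_def diag_array_row_entry)
  show "(\<lambda>j. (j + n - i) mod n) ` filled_row (diag_array n k F) n t i \<subseteq> {..<k}"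
    by (auto simp: filled_row_def diag_array_def split: if_splits)
qed

lemma bij_betw_filled_col_diag_array:
  assumes "j < n" "k \<le> n"
  shows "bij_betw (\<lambda>l. (j + n - l) mod n) {..<k} (filled_col (diag_array n k F) n t j)"
proof (rule bij_betw_byWitness[where f' = "\<lambda>i. (j + n - i) mod n"])
  show "\<forall>l\<in>{..<k}. (j + n - (j + n - l) mod n) mod n = l"
    using assms by (simp add: diff_mod_diff_cancel)
  show "\<forall>i\<in>filled_col (diag_array n k F) n t j. (j + n - (j + n - i) mod n) mod n = i"
    using assms by (simp add: filled_col_def diff_mod_diff_cancel)
  show "(\<lambda>l. (j + n - l) mod n) ` {..<k} \<subseteq> filled_col (diag_array n k F) n t j"
    using assms by (auto simp: filled_col_def diag_array_col_entry)
  show "(\<lambda>i. (j + n - i) mod n) ` filled_col (diag_array n k F) n t j \<subseteq> {..<k}"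
    by (auto simp: filled_col_def diag_array_def split: if_splits)
qed

lemma sum_filled_row_diag_array:
  assumes "i < n" "k \<le> n"
  shows "(\<Sum>j\<in>filled_row (diag_array n k F) n t i. the (diag_array n k F t i j)) = (\<Sum>l<k. F t i l)"
  using assms
  by (simp add: sum.reindex_bij_betw[OF bij_betw_filled_row_diag_array, symmetric]
      diag_array_row_entry)

lemma sum_filled_col_diag_array:
  assumes "j < n" "k \<le> n"
  shows "(\<Sum>i\<in>filled_col (diag_array n k F) n t j. the (diag_array n k F t i j))
    = (\<Sum>l<k. F t ((j + n - l) mod n) l)"
  using assms
  by (simp add: sum.reindex_bij_betw[OF bij_betw_filled_col_diag_array, symmetric]
      diag_array_col_entry)

lemma diag_array_unique_cell:
  assumes "k \<le> n"
    and bij: "bij_betw (\<lambda>(t, i, l). F t i l) ({..<c} \<times> {..<n} \<times> {..<k}) UNIV"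
  shows "\<exists>!(t, i, j). t < c \<and> i < n \<and> j < n \<and> diag_array n k F t i j = Some g"
proof -
  have "g \<in> (\<lambda>(t, i, l). F t i l) ` ({..<c} \<times> {..<n} \<times> {..<k})"
    using bij by (simp add: bij_betw_def)
  then obtain t i l where til: "t < c" "i < n" "l < k" "F t i l = g"
    by auto
  show ?thesis
  proof (rule ex1I[of _ "(t, i, (i + l) mod n)"])
    show "case (t, i, (i + l) mod n) of (t, i, j) \<Rightarrow>
        t < c \<and> i < n \<and> j < n \<and> diag_array n k F t i j = Some g"
      using til assms(1) by (simp add: diag_array_row_entry)
  next
    fix cell
    assume "case cell of (t', i', j') \<Rightarrow>
        t' < c \<and> i' < n \<and> j' < n \<and> diag_array n k F t' i' j' = Some g"
    then obtain t' i' j' where cell: "cell = (t', i', j')" "t' < c" "i' < n" "j' < n"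
      and entry: "diag_array n k F t' i' j' = Some g"
      by (cases cell) auto
    define l' where "l' = (j' + n - i') mod n"
    have "l' < k" "F t' i' l' = g"
      using entry unfolding diag_array_def l'_def by (auto split: if_splits)
    then have "(t', i', l') = (t, i, l)"
      using inj_onD[OF bij_betw_imp_inj_on[OF bij], of "(t', i', l')" "(t, i, l)"] til cell
      by simp
    moreover have "j' = (i' + l') mod n"
      using cell by (simp add: l'_def diff_mod_add_cancel)
    ultimately show "cell = (t, i, (i + l) mod n)"
      using cell by simp
  qed
qed

lemma is_diagonal_MRS_diag_array:
  fixes F :: "nat \<Rightarrow> nat \<Rightarrow> nat \<Rightarrow> 'a::{ab_group_add,finite}"
  assumes "0 < k" "k \<le> n" "0 < c"
    and bij: "bij_betw (\<lambda>(t, i, l). F t i l) ({..<c} \<times> {..<n} \<times> {..<k}) UNIV"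
    and row_sums: "\<And>t i. t < c \<Longrightarrow> i < n \<Longrightarrow> (\<Sum>l<k. F t i l) = \<omega>"
    and col_sums: "\<And>t j. t < c \<Longrightarrow> j < n \<Longrightarrow> (\<Sum>l<k. F t ((j + n - l) mod n) l) = \<delta>"
  shows "is_diagonal_MRS n k c (diag_array n k F)"
  unfolding is_diagonal_MRS_def is_MRS_def
proof (intro conjI allI impI)
  show "card (UNIV :: 'a set) = n * k * c"
    using bij_betw_same_card[OF bij] by (simp add: card_cartesian_product ac_simps)
  show "\<exists>!(t, i, j). t < c \<and> i < n \<and> j < n \<and> diag_array n k F t i j = Some g" for g
    using diag_array_unique_cell[OF assms(2) bij] .
  show "card (filled_row (diag_array n k F) n t i) = k" if "i < n" for t i
    using bij_betw_same_card[OF bij_betw_filled_row_diag_array[OF that assms(2), where F = F and t = t]]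
    by simp
  show "card (filled_col (diag_array n k F) n t j) = k" if "j < n" for t j
    using bij_betw_same_card[OF bij_betw_filled_col_diag_array[OF that assms(2), where F = F and t = t]]
    by simp
  have "(\<Sum>j\<in>filled_row (diag_array n k F) n t i. the (diag_array n k F t i j)) = \<omega>"
    if "t < c" "i < n" for t i
    using sum_filled_row_diag_array[OF that(2) assms(2), where F = F and t = t] row_sums[OF that]
    by simp
  moreover have "(\<Sum>i\<in>filled_col (diag_array n k F) n t j. the (diag_array n k F t i j)) = \<delta>"
    if "t < c" "j < n" for t j
    using sum_filled_col_diag_array[OF that(2) assms(2), where F = F and t = t] col_sums[OF that]
    by simp
  ultimately show "\<exists>\<omega> \<delta>.
      (\<forall>t<c. \<forall>i<n. (\<Sum>j\<in>filled_row (diag_array n k F) n t i. the (diag_array n k F t i j)) = \<omega>) \<and>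
      (\<forall>t<c. \<forall>j<n. (\<Sum>i\<in>filled_col (diag_array n k F) n t j. the (diag_array n k F t i j)) = \<delta>)"
    by blast
  show "\<exists>\<tau><n. \<forall>i<n. \<forall>j<n. diag_array n k F t i j \<noteq> None \<longleftrightarrow> (\<exists>l<k. on_diag n (\<tau> + l) i j)" for t
    using assms(1,2) diag_array_nonempty_iff_on_diag[OF _ _ assms(2), of _ _ F t]
    by (intro exI[of _ 0]) simp
  show "0 < n" "0 < n" "0 < k" "0 < k" "0 < c"
    using assms(1-3) by simp_all
qed

text \<open>The orbit of \<open>x\<close> under the group generated by \<open>x \<mapsto> s - x\<close> and \<open>x \<mapsto> x + u\<close>,
  a Klein four-group when \<open>u + u = 0\<close>.\<close>

definition quad :: "'a::ab_group_add \<Rightarrow> 'a \<Rightarrow> 'a \<Rightarrow> 'a list"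
  where "quad s u x = [x, s - x, s + u - x, x + u]"

lemma length_quad [simp]: "length (quad s u x) = 4"
  by (simp add: quad_def)

lemma set_quad_eq:
  fixes s u x y :: "'a::ab_group_add"
  assumes "u + u = 0" and "y \<in> set (quad s u x)"
  shows "set (quad s u y) = set (quad s u x)"
proof -
  have "- u = u"
    using assms(1) by (simp add: add_eq_0_iff)
  then have minus_u: "z - u = z + u" for z :: 'a
    by (metis diff_conv_add_uminus)
  from assms(2) consider "y = x" | "y = s - x" | "y = s + u - x" | "y = x + u"
    unfolding quad_def by auto
  then show ?thesis
    by cases (auto simp: quad_def algebra_simps minus_u assms(1))
qed

locale quadruple_partition =
  fixes s u :: "'a::ab_group_add"
  assumes two_torsion: "u + u = 0" and nonzero: "u \<noteq> 0"
    and not_double: "x + x \<noteq> s" and not_double_shift: "x + x \<noteq> s + u"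
begin

lemma distinct_quad: "distinct (quad s u x)"
proof -
  have "x + x + u \<noteq> s"
  proof
    assume "x + x + u = s"
    then have "x + x = s + u"
      using two_torsion by (metis add.assoc add.right_neutral)
    then show False
      using not_double_shift by simp
  qed
  then show ?thesis
    using nonzero not_double not_double_shift by (auto simp: quad_def algebra_simps)
qed

lemma set_quad_eq_if_common:
  "z \<in> set (quad s u x) \<Longrightarrow> z \<in> set (quad s u y) \<Longrightarrow> set (quad s u x) = set (quad s u y)"
  using set_quad_eq[OF two_torsion] by metis

lemma card_quad_orbits:
  assumes "finite (UNIV :: 'a set)"
  shows "4 * card (range (\<lambda>x. set (quad s u x))) = card (UNIV :: 'a set)"
proof -
  have "4 * card (range (\<lambda>x. set (quad s u x))) = card (\<Union>(range (\<lambda>x. set (quad s u x))))"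
  proof (rule card_partition)
    show "finite (range (\<lambda>x. set (quad s u x)))" "finite (\<Union>(range (\<lambda>x. set (quad s u x))))"
      using assms by simp_all
    show "card C = 4" if "C \<in> range (\<lambda>x. set (quad s u x))" for C
      using that distinct_card[OF distinct_quad] by auto
    show "C1 \<inter> C2 = {}"
      if "C1 \<in> range (\<lambda>x. set (quad s u x))" "C2 \<in> range (\<lambda>x. set (quad s u x))" "C1 \<noteq> C2"
      for C1 C2
      using that set_quad_eq_if_common by blast
  qed
  also have "\<Union>(range (\<lambda>x. set (quad s u x))) = UNIV"
    by (auto simp: quad_def)
  finally show ?thesis .
qed

lemma ex_bij_betw_quad:
  assumes "finite (UNIV :: 'a set)" "finite I" "card (UNIV :: 'a set) = 4 * card I"
  shows "\<exists>e. bij_betw (\<lambda>(q, p). quad s u (e p) ! q) ({..<4} \<times> I) UNIV"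
proof -
  let ?orbits = "range (\<lambda>x. set (quad s u x))"
  have "card I = card ?orbits"
    using card_quad_orbits[OF assms(1)] assms(3) by simp
  then obtain orb where orb: "bij_betw orb I ?orbits"
    using finite_same_card_bij[OF assms(2)] assms(1) by blast
  define e where "e p = (SOME x. set (quad s u x) = orb p)" for p
  have set_quad_e: "set (quad s u (e p)) = orb p" if "p \<in> I" for p
  proof -
    have "\<exists>x. set (quad s u x) = orb p"
      using bij_betw_apply[OF orb that] by auto
    then show ?thesis
      unfolding e_def by (rule someI_ex)
  qed
  have "inj_on (\<lambda>(q, p). quad s u (e p) ! q) ({..<4} \<times> I)"
  proof (rule inj_onI, clarsimp)
    fix q p q' p'
    assume "q < 4" "p \<in> I" "q' < 4" "p' \<in> I" and eq: "quad s u (e p) ! q = quad s u (e p') ! q'"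
    then have "orb p = orb p'"
      using set_quad_eq_if_common[of "quad s u (e p) ! q" "e p" "e p'"] set_quad_e
      by (metis nth_mem length_quad)
    then have "p = p'"
      using orb \<open>p \<in> I\<close> \<open>p' \<in> I\<close> by (auto simp: bij_betw_def dest: inj_onD)
    moreover have "q = q'"
      using nth_eq_iff_index_eq[OF distinct_quad] eq \<open>p = p'\<close> \<open>q < 4\<close> \<open>q' < 4\<close> by simp
    ultimately show "q = q' \<and> p = p'"
      by simp
  qed
  moreover have "g \<in> (\<lambda>(q, p). quad s u (e p) ! q) ` ({..<4} \<times> I)" for g
  proof -
    have "set (quad s u g) \<in> orb ` I"
      using bij_betw_imp_surj_on[OF orb] by simp
    then obtain p where "p \<in> I" "g \<in> set (quad s u (e p))"
      using set_quad_e by (force simp: quad_def)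
    then obtain q where "q < 4" "g = quad s u (e p) ! q"
      by (metis in_set_conv_nth length_quad)
    then show ?thesis
      using \<open>p \<in> I\<close> by force
  qed
  ultimately show ?thesis
    unfolding bij_betw_def by blast
qed

end

lemma card_even_if_fixpoint_free_involution:
  assumes "finite S"
    and "\<And>x. x \<in> S \<Longrightarrow> f x \<in> S" "\<And>x. x \<in> S \<Longrightarrow> f x \<noteq> x" "\<And>x. x \<in> S \<Longrightarrow> f (f x) = x"
  shows "even (card S)"
proof -
  define pairs where "pairs = (\<lambda>x. {x, f x}) ` S"
  have "2 * card pairs = card (\<Union>pairs)"
  proof (rule card_partition)
    show "finite pairs" "finite (\<Union>pairs)"
      using assms(1) by (auto simp: pairs_def)
    show "card C = 2" if "C \<in> pairs" for C
      using that assms(3) unfolding pairs_def by fastforce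
    show "C1 \<inter> C2 = {}" if "C1 \<in> pairs" "C2 \<in> pairs" "C1 \<noteq> C2" for C1 C2
      using that assms(4) unfolding pairs_def by auto metis+
  qed
  moreover have "\<Union>pairs = S"
    using assms(2) by (auto simp: pairs_def)
  ultimately show ?thesis
    by (metis dvd_triv_left)
qed

lemma ex_two_torsion_if_even_card:
  fixes S :: "'a::ab_group_add set"
  assumes "finite S" "0 \<in> S" "\<And>x. x \<in> S \<Longrightarrow> - x \<in> S" "even (card S)"
  shows "\<exists>u\<in>S. u \<noteq> 0 \<and> u + u = 0"
proof (rule ccontr)
  assume no_two_torsion: "\<not> ?thesis"
  have "even (card (S - {0}))"
  proof (rule card_even_if_fixpoint_free_involution[where f = uminus])
    show "- x \<noteq> x" if "x \<in> S - {0}" for x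
      using that no_two_torsion eq_neg_iff_add_eq_0[of x x] by auto
  qed (use assms(1,3) in auto)
  moreover have "card S = Suc (card (S - {0}))"
    using card.remove[OF assms(1,2)] .
  ultimately show False
    using assms(4) by simp
qed

lemma card_doubles_mult_card_two_torsion:
  "card (range (\<lambda>x::'a::{ab_group_add,finite}. x + x)) * card {x::'a. x + x = 0} = card (UNIV :: 'a set)"
proof -
  let ?D = "range (\<lambda>x::'a. x + x)" and ?K = "{x::'a. x + x = 0}"
  have fibre: "{x. x + x = y + y} = (\<lambda>k. y + k) ` ?K" for y :: 'a
  proof (intro set_eqI iffI)
    fix x
    assume "x \<in> {x. x + x = y + y}"
    then have "(x - y) + (x - y) = 0"
      by (simp add: algebra_simps)
    then show "x \<in> (\<lambda>k. y + k) ` ?K"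
      by (intro image_eqI[of _ _ "x - y"]) auto
  qed (auto simp: algebra_simps)
  have "card (UNIV :: 'a set) = card (\<Union>d\<in>?D. {x. x + x = d})"
    by (rule arg_cong[where f = card]) auto
  also have "\<dots> = (\<Sum>d\<in>?D. card {x. x + x = d})"
    by (rule card_UN_disjoint) auto
  also have "\<dots> = (\<Sum>d\<in>?D. card ?K)"
    by (rule sum.cong) (auto simp: fibre card_image inj_on_def)
  finally show ?thesis
    by simp
qed

text \<open>Either the \<open>2\<close>-torsion \<open>K\<close> has at least three elements, so that the doubles \<open>D\<close> fill at
  most a third of the group, or \<open>K = {0, v}\<close>; then \<open>|D| = |\<Gamma>|/2\<close> is even, so \<open>D\<close> contains an
  element of order two, necessarily \<open>v\<close>, and \<open>D + v = D\<close>.\<close>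

lemma ex_two_torsion_card_doubles_union_translate_less:
  assumes "4 dvd card (UNIV :: 'a::{ab_group_add,finite} set)"
  shows "\<exists>u::'a. u + u = 0 \<and> u \<noteq> 0 \<and>
    card (range (\<lambda>x. x + x) \<union> (\<lambda>d. d + u) ` range (\<lambda>x. x + x)) < card (UNIV :: 'a set)"
proof -
  let ?N = "card (UNIV :: 'a set)"
  let ?D = "range (\<lambda>x::'a. x + x)" and ?K = "{x::'a. x + x = 0}"
  have card_DK: "card ?D * card ?K = ?N"
    by (rule card_doubles_mult_card_two_torsion)
  have "0 < card ?D"
    by (simp add: card_gt_0_iff)
  have "even ?N"
    using dvd_trans[OF _ assms, of 2] by simp
  then obtain v :: 'a where v: "v \<noteq> 0" "v + v = 0"
    using ex_two_torsion_if_even_card[OF finite_UNIV] by auto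
  show ?thesis
  proof (cases "card ?K \<le> 2")
    case True
    have "{0, v} \<subseteq> ?K" "card {0, v} = 2"
      using v by auto
    then have K: "?K = {0, v}"
      using True by (metis card_seteq finite)
    have "card ?D * 2 = ?N"
      using card_DK K v(1) by simp
    then have "even (card ?D)"
      using assms dvd_times_right_cancel_iff[of 2 2 "card ?D"] by simp
    moreover have "0 \<in> ?D"
      by (rule range_eqI[of _ _ 0]) simp
    moreover have "- d \<in> ?D" if "d \<in> ?D" for d
      using that by (auto intro: range_eqI[of _ _ "- _"])
    ultimately obtain w where "w \<in> ?D" "w \<noteq> 0" "w + w = 0"
      using ex_two_torsion_if_even_card[of ?D] by auto
    then obtain y where "v = y + y"
      using K by auto
    then have "(\<lambda>d. d + v) ` ?D \<subseteq> ?D"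
      by (auto intro!: image_eqI[of _ _ "_ + y"] simp: algebra_simps)
    moreover have "card ?D < ?N"
      using card_DK K v(1) \<open>0 < card ?D\<close> by simp
    ultimately show ?thesis
      using v by (metis Un_absorb2)
  next
    case False
    have "card (?D \<union> (\<lambda>d. d + v) ` ?D) \<le> card ?D + card ?D"
      using card_Un_le[of ?D "(\<lambda>d. d + v) ` ?D"] card_image_le[OF finite, of "\<lambda>d. d + v" ?D]
      by linarith
    also have "\<dots> < card ?D * 3"
      using \<open>0 < card ?D\<close> by simp
    also have "\<dots> \<le> card ?D * card ?K"
      using False by simp
    finally show ?thesis
      using card_DK v by auto
  qed
qed

lemma ex_quadruple_partition:
  assumes "4 dvd card (UNIV :: 'a::{ab_group_add,finite} set)"
  shows "\<exists>s u :: 'a. quadruple_partition s u"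
proof -
  obtain u :: 'a where u: "u + u = 0" "u \<noteq> 0"
    and "card (range (\<lambda>x. x + x) \<union> (\<lambda>d. d + u) ` range (\<lambda>x. x + x)) < card (UNIV :: 'a set)"
    using ex_two_torsion_card_doubles_union_translate_less[OF assms] by blast
  then obtain s where s: "s \<notin> range (\<lambda>x. x + x) \<union> (\<lambda>d. d + u) ` range (\<lambda>x. x + x)"
    by (metis UNIV_I less_irrefl subsetI subset_antisym)
  have "quadruple_partition s u"
  proof
    show "x + x \<noteq> s" for x
      using s by auto
    show "x + x \<noteq> s + u" for x
    proof
      assume "x + x = s + u"
      then have "s = x + x + u"
        using u(1) by (metis add.assoc add.right_neutral)
      then show False
        using s by auto
    qed
  qed (use u in auto)
  then show ?thesis
    by blast
qed

lemma sum_lessThan_four_mult: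
  fixes f :: "nat \<Rightarrow> 'a::comm_monoid_add"
  shows "(\<Sum>l<4 * b. f l) = (\<Sum>m<b. f (4 * m) + f (4 * m + 1) + f (4 * m + 2) + f (4 * m + 3))"
  using sum.nat_group[of f 4 b] by (simp add: mult.commute numeral_eq_Suc add.assoc)

definition quad_label :: "'a::ab_group_add \<Rightarrow> 'a \<Rightarrow> (nat \<times> nat \<times> nat \<Rightarrow> 'a) \<Rightarrow> nat \<Rightarrow> nat \<Rightarrow> nat \<Rightarrow> nat \<Rightarrow> 'a"
  where "quad_label s u e n t i l = quad s u (e (t, l div 4, (i + l mod 2) mod n)) ! (l mod 4)"

lemma quad_label_block:
  assumes "q < 4"
  shows "quad_label s u e n t i (4 * m + q) = quad s u (e (t, m, (i + q mod 2) mod n)) ! q"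
proof -
  have "(4 * m + q) div 4 = m" "(4 * m + q) mod 4 = q" "(4 * m + q) mod 2 = q mod 2"
    using assms by presburger+
  then show ?thesis
    by (simp add: quad_label_def)
qed

lemma quad_label_row_sum:
  assumes "u + u = 0" "i < n"
  shows "(\<Sum>l<4 * b. quad_label s u e n t i l) = (\<Sum>m<b. s + s)"
proof (subst sum_lessThan_four_mult, rule sum.cong)
  fix m
  define x where "x = e (t, m, i)"
  define y where "y = e (t, m, (i + 1) mod n)"
  have block: "quad_label s u e n t i (4 * m + q) = quad s u (e (t, m, (i + q mod 2) mod n)) ! q"
    if "q < 4" for q
    using quad_label_block[OF that] .
  have "quad_label s u e n t i (4 * m) + quad_label s u e n t i (4 * m + 1)
      + quad_label s u e n t i (4 * m + 2) + quad_label s u e n t i (4 * m + 3)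
      = x + (s - y) + (s + u - x) + (y + u)"
    using block[of 0] block[of 1] block[of 2] block[of 3] assms(2) by (simp add: quad_def x_def y_def)
  also have "\<dots> = s + s"
    using assms(1) by (simp add: algebra_simps)
  finally show "quad_label s u e n t i (4 * m) + quad_label s u e n t i (4 * m + 1)
      + quad_label s u e n t i (4 * m + 2) + quad_label s u e n t i (4 * m + 3) = s + s" .
qed simp

lemma quad_label_col_sum:
  assumes "u + u = 0" "4 * b \<le> n"
  shows "(\<Sum>l<4 * b. quad_label s u e n t ((j + n - l) mod n) l) = (\<Sum>m<b. s + s)"
proof (subst sum_lessThan_four_mult, rule sum.cong)
  fix m
  assume "m \<in> {..<b}"
  then have "4 * m + 3 < j + n"
    using assms(2) by simp
  then have next_row: "((j + n - (4 * m + 1)) mod n + 1) mod n = (j + n - 4 * m) mod n"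
      "((j + n - (4 * m + 3)) mod n + 1) mod n = (j + n - (4 * m + 2)) mod n"
    using mod_diff_add_one[of "4 * m" "j + n" n] mod_diff_add_one[of "4 * m + 2" "j + n" n]
    by (simp_all add: numeral_3_eq_3)
  define x where "x = e (t, m, (j + n - 4 * m) mod n)"
  define y where "y = e (t, m, (j + n - (4 * m + 2)) mod n)"
  let ?f = "\<lambda>l. quad_label s u e n t ((j + n - l) mod n) l"
  have block: "?f (4 * m + q) = quad s u (e (t, m, ((j + n - (4 * m + q)) mod n + q mod 2) mod n)) ! q"
    if "q < 4" for q
    using quad_label_block[OF that] .
  have "?f (4 * m) = x"
    using block[of 0] by (simp add: quad_def x_def)
  moreover have "?f (4 * m + 1) = quad s u (e (t, m, ((j + n - (4 * m + 1)) mod n + 1) mod n)) ! 1"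
    using block[of 1] by simp
  then have "?f (4 * m + 1) = s - x"
    unfolding next_row(1) by (simp add: quad_def x_def)
  moreover have "?f (4 * m + 2) = s + u - y"
    using block[of 2] by (simp add: quad_def y_def)
  moreover have "?f (4 * m + 3) = quad s u (e (t, m, ((j + n - (4 * m + 3)) mod n + 1) mod n)) ! 3"
    using block[of 3] by simp
  then have "?f (4 * m + 3) = y + u"
    unfolding next_row(2) by (simp add: quad_def y_def)
  ultimately have "?f (4 * m) + ?f (4 * m + 1) + ?f (4 * m + 2) + ?f (4 * m + 3)
      = x + (s - x) + (s + u - y) + (y + u)"
    by simp
  also have "\<dots> = s + s"
    using assms(1) by (simp add: algebra_simps)
  finally show "?f (4 * m) + ?f (4 * m + 1) + ?f (4 * m + 2) + ?f (4 * m + 3) = s + s" .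
qed simp

lemma bij_betw_quad_label:
  fixes e :: "nat \<times> nat \<times> nat \<Rightarrow> 'a::ab_group_add"
  assumes "bij_betw (\<lambda>(q, p). quad s u (e p) ! q) ({..<4} \<times> ({..<c} \<times> {..<b} \<times> {..<n})) UNIV"
  shows "bij_betw (\<lambda>(t, i, l). quad_label s u e n t i l) ({..<c} \<times> {..<n} \<times> {..<4 * b}) UNIV"
proof -
  define index where "index = (\<lambda>(t, i, l). (l mod 4, t :: nat, l div 4, (i + l mod 2) mod n))"
  have "inj_on index ({..<c} \<times> {..<n} \<times> {..<4 * b})"
  proof (rule inj_onI, clarsimp simp: index_def)
    fix t i l i' l'
    assume "i < n" "i' < n" and l: "l mod 4 = l' mod 4" "l div 4 = l' div 4"
      and row: "(i + l mod 2) mod n = (i' + l' mod 2) mod n"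
    have "l = l'"
      using l by (metis div_mult_mod_eq)
    let ?d = "l mod 2 mod n"
    have "?d < n"
      using \<open>i < n\<close> by simp
    have "(?d + i) mod n = (?d + i') mod n"
      using row \<open>l = l'\<close> by (simp add: mod_add_right_eq add.commute)
    then have "i = i'"
      using add_mod_diff_cancel[OF \<open>?d < n\<close>] \<open>i < n\<close> \<open>i' < n\<close> by metis
    with \<open>l = l'\<close> show "i = i' \<and> l = l'" by simp
  qed
  moreover have "index ` ({..<c} \<times> {..<n} \<times> {..<4 * b}) \<subseteq> {..<4} \<times> ({..<c} \<times> {..<b} \<times> {..<n})"
    by (auto simp: index_def less_mult_imp_div_less)
  moreover have "card ({..<c} \<times> {..<n} \<times> {..<4 * b}) = card ({..<4::nat} \<times> ({..<c} \<times> {..<b} \<times> {..<n}))"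
    by (simp add: card_cartesian_product)
  ultimately have "bij_betw index ({..<c} \<times> {..<n} \<times> {..<4 * b}) ({..<4} \<times> ({..<c} \<times> {..<b} \<times> {..<n}))"
    by (metis bij_betw_def card_image card_subset_eq finite_SigmaI finite_lessThan)
  moreover have "(\<lambda>(t, i, l). quad_label s u e n t i l) = (\<lambda>(q, p). quad s u (e p) ! q) \<circ> index"
    by (auto simp: index_def quad_label_def)
  ultimately show ?thesis
    using bij_betw_trans[OF _ assms] by metis
qed

theorem proposition5p8:
  fixes b n c :: nat
  assumes "0 < b" and "0 < n" and "0 < c"
    and "4 \<le> 4 * b" and "4 * b \<le> n"
    and "card (UNIV :: 'a::{ab_group_add,finite} set) = 4 * n * b * c"
  shows "\<exists>A :: nat \<Rightarrow> nat \<Rightarrow> nat \<Rightarrow> 'a option. is_diagonal_MRS n (4 * b) c A"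
proof -
  have "4 dvd card (UNIV :: 'a set)"
    using assms(6) by (simp add: mult.assoc)
  then obtain s u :: 'a where "quadruple_partition s u"
    using ex_quadruple_partition by blast
  then interpret quadruple_partition s u .
  have card_UNIV: "card (UNIV :: 'a set) = 4 * card ({..<c} \<times> {..<b} \<times> {..<n})"
    using assms(6) by (simp add: card_cartesian_product)
  obtain e where "bij_betw (\<lambda>(q, p). quad s u (e p) ! q) ({..<4} \<times> ({..<c} \<times> {..<b} \<times> {..<n})) UNIV"
    using ex_bij_betw_quad[OF finite_UNIV _ card_UNIV] by auto
  then have "is_diagonal_MRS n (4 * b) c (diag_array n (4 * b) (quad_label s u e n))"
    using assms(1-5) two_torsion
    by (intro is_diagonal_MRS_diag_array[where \<omega> = "\<Sum>m<b. s + s" and \<delta> = "\<Sum>m<b. s + s"]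
        bij_betw_quad_label quad_label_row_sum quad_label_col_sum) simp_all
  then show ?thesis
    by blast
qed

end
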